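(* Let $a=1/4$, $d=3/4$, $e=1/2$. Let $U_1$ be the uninorm on $[0,1]$ defined by $U_1(p,q)=1$ if $\max(p,q)=1$; $U_1(p,q)=0$ if $\min(p,q)=0$ and $\max(p,q)<1$; and $U_1(p,q)=\big(\min(p^{2^{-n}},q^{2^{-m}})\big)^{2^{n+m}}$ if $p\in\,]2^{-2^{n+1}},2^{-2^{n}}]$, $q\in\,]2^{-2^{m+1}},2^{-2^{m}}]$, $n,m\in\mathbb{Z}$. Let $U_1^*(x,y)=\tfrac14+\tfrac12U_1(2(x-\tfrac14),2(y-\tfrac14))$ for $x,y\in\,]\tfrac14,\tfrac34[$. Let $$f(s)=\begin{cases}4s^2 & s\le \tfrac14,\\ 2(s-\tfrac14)^2+\tfrac14 & s\in\,]\tfrac14,\tfrac34[,\\ 4(s-\tfrac34)^2+\tfrac34 & s\ge\tfrac34,\end{cases}$$ with iterates $f^{(n)}$, $n\in\mathbb{Z}$ (so $f^{(n)}(s)=\tfrac14(4s)^{2^n}$ for $s\le\tfrac14$, $\tfrac14+\tfrac12(2(s-\tfrac14))^{2^n}$ for $s\in\,]\tfrac14,\tfrac34[$, $\tfrac34+\tfrac14(4(s-\tfrac34))^{2^n}$ for $s\ge\tfrac34$). Define $U:[0,1]^2\to[0,1]$ by $$U(x,y)=\begin{cases}1 & \max(x,y)=1,\\ 0 & x,y\in[0,a],\\ 1 & x,y\in[d,1[,\\ d & (x,y)\in[0,a]\times[d,1[\ \cup\ [d,1[\times[0,a],\\ f^{(n)}(x) & x\in[0,a]\cup[d,1[,\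 y\in\,]f^{(n+1)}(e),f^{(n)}(e)],\ n\in\mathbb{Z},\\ f^{(n)}(y) & y\in[0,a]\cup[d,1[,\ x\in\,]f^{(n+1)}(e),f^{(n)}(e)],\ n\in\mathbb{Z},\\ U_1^*(x,y) & x,y\in\,]a,d[.\end{cases}$$ Then $U$ is a disjunctive uninorm with neutral element $1/2$.
   Context: A uninorm is a map $U:[0,1]^2\to[0,1]$ that is commutative, associative, non-decreasing in each variable, and has a neutral element $e\in[0,1]$; it is disjunctive if $U(1,0)=1$. For a continuous strictly increasing bijection $f:[0,1]\to[0,1]$: $f^{(0)}=\mathrm{id}$, $f^{(n)}=f\circ f^{(n-1)}$ and $f^{(-n)}=f^{-1}\circ f^{(-n+1)}$ for $n\in\mathbb{N}$. The intervals $]f^{(n+1)}(1/2),f^{(n)}(1/2)]$, $n\in\mathbb{Z}$, partition $]1/4,3/4[$. *)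

theory Defs
  imports Complex_Main
begin

definition uninorm :: "(real \<Rightarrow> real \<Rightarrow> real) \<Rightarrow> real \<Rightarrow> bool" where
  "uninorm U e \<longleftrightarrow>
     e \<in> {0..1} \<and>
     (\<forall>x\<in>{0..1}. \<forall>y\<in>{0..1}. U x y \<in> {0..1}) \<and>
     (\<forall>x\<in>{0..1}. \<forall>y\<in>{0..1}. U x y = U y x) \<and>
     (\<forall>x\<in>{0..1}. \<forall>y\<in>{0..1}. \<forall>z\<in>{0..1}. U (U x y) z = U x (U y z)) \<and>
     (\<forall>x1\<in>{0..1}. \<forall>x2\<in>{0..1}. \<forall>y\<in>{0..1}. x1 \<le> x2 \<longrightarrow> U x1 y \<le> U x2 y) \<and>
     (\<forall>x\<in>{0..1}. \<forall>y1\<in>{0..1}. \<forall>y2\<in>{0..1}. y1 \<le> y2 \<longrightarrow> U x y1 \<le> U x y2) \<and>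
     (\<forall>x\<in>{0..1}. U e x = x \<and> U x e = x)"

definition disjunctive :: "(real \<Rightarrow> real \<Rightarrow> real) \<Rightarrow> bool" where
  "disjunctive U \<longleftrightarrow> U 1 0 = 1"

definition fiter :: "(real \<Rightarrow> real) \<Rightarrow> int \<Rightarrow> real \<Rightarrow> real" where
  "fiter f n = (if 0 \<le> n then f ^^ nat n else (inv_into {0..1} f) ^^ nat (- n))"

definition U1 :: "real \<Rightarrow> real \<Rightarrow> real" where
  "U1 p q =
    (if max p q = 1 then 1
     else if min p q = 0 then 0
     else (let n = (THE n::int. p \<in> {2 powr (- (2 powr real_of_int (n+1))) <.. 2 powr (- (2 powr real_of_int n))});
               m = (THE m::int. q \<in> {2 powr (- (2 powr real_of_int (m+1))) <.. 2 powr (- (2 powr real_of_int m))})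
           in (min (p powr (2 powr (- real_of_int n))) (q powr (2 powr (- real_of_int m))))
                powr (2 powr real_of_int (n + m))))"

definition U1star :: "real \<Rightarrow> real \<Rightarrow> real" where
  "U1star x y = 1/4 + 1/2 * U1 (2 * (x - 1/4)) (2 * (y - 1/4))"

definition fF :: "real \<Rightarrow> real" where
  "fF s = (if s \<le> 1/4 then 4 * s^2
           else if s < 3/4 then 2 * (s - 1/4)^2 + 1/4
           else 4 * (s - 3/4)^2 + 3/4)"

definition idx :: "real \<Rightarrow> int" where
  "idx x = (THE n::int. x \<in> {fiter fF (n+1) (1/2) <.. fiter fF n (1/2)})"

definition UU :: "real \<Rightarrow> real \<Rightarrow> real" where
  "UU x y =
    (let a = (1/4::real); d = (3/4::real) in
     if max x y = 1 then 1
     else if x \<in> {0..a} \<and> y \<in> {0..a} then 0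
     else if x \<in> {d..<1} \<and> y \<in> {d..<1} then 1
     else if (x \<in> {0..a} \<and> y \<in> {d..<1}) \<or> (x \<in> {d..<1} \<and> y \<in> {0..a}) then d
     else if (x \<in> {0..a} \<or> x \<in> {d..<1}) \<and> y \<in> {a<..<d} then fiter fF (idx y) x
     else if (y \<in> {0..a} \<or> y \<in> {d..<1}) \<and> x \<in> {a<..<d} then fiter fF (idx x) y
     else U1star x y)"

end

theory Submission
  imports Defs
begin

text \<open>
  In the coordinate \<open>t = log\<^sub>2 (- log\<^sub>2 p)\<close> the uninorm \<open>U1\<close> on \<open>]0,1[\<close> becomes the operation
  \<open>\<lfloor>a\<rfloor> + \<lfloor>b\<rfloor> + max (frac a) (frac b)\<close> on the reals, which is commutative, associative,
  monotone, has neutral element \<open>0\<close>, and has additive integer part. So \<open>U1star\<close> is a uninorm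
  on \<open>]1/4,3/4[\<close>, and \<open>idx\<close>, which reads off that integer part, is a homomorphism to \<open>\<int>\<close>.
  On each of \<open>[0,1/4]\<close>, \<open>]1/4,3/4[\<close>, \<open>[3/4,1]\<close> the map \<open>fF\<close> is squaring conjugated by an
  affine bijection with \<open>[0,1]\<close>, so its \<open>n\<close>-th iterate is the conjugate of \<open>x \<mapsto> x powr 2 powr n\<close>,
  and these iterates form an action of \<open>\<int>\<close> preserving the pieces.
  Thus \<open>UU\<close> lets the middle piece act on the outer ones through this action composed with \<open>idx\<close>,
  while on two outer arguments it only depends on their pieces and takes the values \<open>0\<close>, \<open>3/4\<close>,
  \<open>1\<close>, all fixed by the action. Associativity follows case by case from these facts, and
  monotonicity from the order of the pieces.
\<close>

section \<open>A floor-additive operation on the reals\<close>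

definition frac_max_add :: "real \<Rightarrow> real \<Rightarrow> real" where
  "frac_max_add a b = of_int (\<lfloor>a\<rfloor> + \<lfloor>b\<rfloor>) + max (frac a) (frac b)"

lemma floor_frac_max_add [simp]: "\<lfloor>frac_max_add a b\<rfloor> = \<lfloor>a\<rfloor> + \<lfloor>b\<rfloor>"
  unfolding frac_max_add_def by (rule floor_unique) (auto simp: frac_lt_1 max_def)

lemma frac_frac_max_add [simp]: "frac (frac_max_add a b) = max (frac a) (frac b)"
  by (simp add: frac_def[of "frac_max_add a b"]) (simp add: frac_max_add_def)

lemma frac_max_add_assoc: "frac_max_add (frac_max_add a b) c = frac_max_add a (frac_max_add b c)"
  unfolding frac_max_add_def[of "frac_max_add a b" c] frac_max_add_def[of a "frac_max_add b c"]
  by (simp add: max.assoc add.assoc)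

lemma frac_max_add_commute: "frac_max_add a b = frac_max_add b a"
  by (simp add: frac_max_add_def max.commute add.commute)

lemma frac_max_add_0_right [simp]: "frac_max_add a 0 = a"
  by (simp add: frac_max_add_def max_absorb1 frac_def)

lemma frac_max_add_mono:
  assumes "a \<le> a'" shows "frac_max_add a b \<le> frac_max_add a' b"
proof (cases "\<lfloor>a\<rfloor> = \<lfloor>a'\<rfloor>")
  case True
  then have "frac a \<le> frac a'" using assms by (simp add: frac_def)
  with True show ?thesis by (simp add: frac_max_add_def max.mono)
next
  case False
  then have "real_of_int \<lfloor>a\<rfloor> + 1 \<le> real_of_int \<lfloor>a'\<rfloor>"
    using floor_mono[OF assms] by linarith
  moreover have "max (frac a) (frac b) < 1" by (simp add: frac_lt_1)
  ultimately show ?thesis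
    unfolding frac_max_add_def by (smt (verit) frac_ge_0 of_int_add)
qed

section \<open>The uninorm \<open>U1\<close> in double-logarithmic coordinates\<close>

definition dexp :: "real \<Rightarrow> real" where
  "dexp t = 2 powr - (2 powr t)"

definition dlog :: "real \<Rightarrow> real" where
  "dlog p = log 2 (- log 2 p)"

lemma dexp_pos: "0 < dexp t"
  by (simp add: dexp_def)

lemma dexp_less_1: "dexp t < 1"
  unfolding dexp_def by (simp add: powr_less_one)

lemma dlog_dexp [simp]: "dlog (dexp t) = t"
  by (simp add: dexp_def dlog_def)

lemma dexp_dlog: "0 < p \<Longrightarrow> p < 1 \<Longrightarrow> dexp (dlog p) = p"
  by (simp add: dexp_def dlog_def)

lemma dexp_less_iff [simp]: "dexp s < dexp t \<longleftrightarrow> t < s"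
  by (simp add: dexp_def)

lemma dexp_le_iff [simp]: "dexp s \<le> dexp t \<longleftrightarrow> t \<le> s"
  by (simp add: dexp_def)

lemma dexp_powr: "dexp t powr (2 powr s) = dexp (t + s)"
  by (simp add: dexp_def powr_powr powr_add)

lemma dlog_antimono:
  assumes "0 < p" "p \<le> q" "q < 1" shows "dlog q \<le> dlog p"
proof -
  have "dexp (dlog p) \<le> dexp (dlog q)" using assms by (simp add: dexp_dlog)
  then show ?thesis by simp
qed

lemma floor_dlog_iff:
  assumes "p \<in> {0<..<1}"
  shows "p \<in> {dexp (of_int n + 1) <.. dexp (of_int n)} \<longleftrightarrow> \<lfloor>dlog p\<rfloor> = n"
proof -
  have "p \<in> {dexp (of_int n + 1) <.. dexp (of_int n)} \<longleftrightarrow>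
      dexp (of_int n + 1) < dexp (dlog p) \<and> dexp (dlog p) \<le> dexp (of_int n)"
    using assms by (simp add: dexp_dlog)
  also have "\<dots> \<longleftrightarrow> \<lfloor>dlog p\<rfloor> = n"
    by (simp add: floor_eq_iff) linarith
  finally show ?thesis .
qed

lemma U1_eq_dexp:
  assumes "p \<in> {0<..<1}" "q \<in> {0<..<1}"
  shows "U1 p q = dexp (frac_max_add (dlog p) (dlog q))"
proof -
  have level:
    "(THE n::int. r \<in> {2 powr (- (2 powr real_of_int (n+1))) <.. 2 powr (- (2 powr real_of_int n))})
      = \<lfloor>dlog r\<rfloor>" if "r \<in> {0<..<1}" for r
    using floor_dlog_iff[of r] that by (simp add: dexp_def)
  have "max p q \<noteq> 1" "min p q \<noteq> 0"
    using assms by auto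
  then have "U1 p q =
      min (dexp (dlog p) powr (2 powr - \<lfloor>dlog p\<rfloor>)) (dexp (dlog q) powr (2 powr - \<lfloor>dlog q\<rfloor>))
        powr (2 powr (\<lfloor>dlog p\<rfloor> + \<lfloor>dlog q\<rfloor>))"
    unfolding U1_def level[OF assms(1)] level[OF assms(2)] Let_def using assms
    by (simp add: dexp_dlog)
  also have "\<dots> = dexp (frac_max_add (dlog p) (dlog q))"
    by (simp add: dexp_powr min_def frac_max_add_def frac_def max_def algebra_simps)
  finally show ?thesis .
qed

lemma U1_mem: "p \<in> {0<..<1} \<Longrightarrow> q \<in> {0<..<1} \<Longrightarrow> U1 p q \<in> {0<..<1}"
  by (simp add: U1_eq_dexp dexp_pos dexp_less_1)

lemma floor_dlog_U1:
  "p \<in> {0<..<1} \<Longrightarrow> q \<in> {0<..<1} \<Longrightarrow> \<lfloor>dlog (U1 p q)\<rfloor> = \<lfloor>dlog p\<rfloor> + \<lfloor>dlog q\<rfloor>"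
  by (simp add: U1_eq_dexp)

lemma U1_commute: "p \<in> {0<..<1} \<Longrightarrow> q \<in> {0<..<1} \<Longrightarrow> U1 p q = U1 q p"
  by (simp add: U1_eq_dexp frac_max_add_commute)

lemma U1_assoc:
  "p \<in> {0<..<1} \<Longrightarrow> q \<in> {0<..<1} \<Longrightarrow> r \<in> {0<..<1} \<Longrightarrow> U1 (U1 p q) r = U1 p (U1 q r)"
  by (simp add: U1_eq_dexp dexp_pos dexp_less_1 frac_max_add_assoc)

lemma U1_mono:
  "p \<in> {0<..<1} \<Longrightarrow> p' \<in> {0<..<1} \<Longrightarrow> q \<in> {0<..<1} \<Longrightarrow> p \<le> p' \<Longrightarrow> U1 p q \<le> U1 p' q"
  by (simp add: U1_eq_dexp frac_max_add_mono dlog_antimono)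

lemma dlog_half [simp]: "dlog (1/2) = 0"
proof -
  have "dexp 0 = 1/2" by (simp add: dexp_def powr_minus_divide)
  then show ?thesis by (metis dlog_dexp)
qed

lemma U1_half_right: "p \<in> {0<..<1} \<Longrightarrow> U1 p (1/2) = p"
  by (simp add: U1_eq_dexp dexp_dlog)

section \<open>Integer iterates of \<open>fF\<close>\<close>

definition sq_iter :: "real \<Rightarrow> real \<Rightarrow> int \<Rightarrow> real \<Rightarrow> real" where
  "sq_iter c w n x = c + w * ((x - c) / w) powr (2 powr n)"

context
  fixes c w :: real
  assumes w_pos: "0 < w"
begin

lemma sq_iter_0: "c \<le> x \<Longrightarrow> sq_iter c w 0 x = x"
  using w_pos by (simp add: sq_iter_def)

lemma sq_iter_1: "c \<le> x \<Longrightarrow> sq_iter c w 1 x = c + w * ((x - c) / w)\<^sup>2"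
  using w_pos by (simp add: sq_iter_def powr_numeral)

lemma sq_iter_ge: "c \<le> sq_iter c w n x"
  using w_pos by (simp add: sq_iter_def)

lemma sq_iter_gt: "c < x \<Longrightarrow> c < sq_iter c w n x"
  using w_pos by (simp add: sq_iter_def)

lemma sq_iter_le: "c \<le> x \<Longrightarrow> x \<le> c + w \<Longrightarrow> sq_iter c w n x \<le> c + w"
  using w_pos by (simp add: sq_iter_def powr_le1)

lemma sq_iter_less:
  assumes "c \<le> x" "x < c + w" shows "sq_iter c w n x < c + w"
proof -
  have "((x - c) / w) powr (2 powr n) < 1 powr (2 powr n)"
    using assms w_pos by (intro powr_less_mono2) auto
  then show ?thesis using w_pos by (simp add: sq_iter_def)
qed

lemma sq_iter_sq_iter: "sq_iter c w m (sq_iter c w n x) = sq_iter c w (n + m) x"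
proof -
  have "(sq_iter c w n x - c) / w = ((x - c) / w) powr (2 powr n)"
    using w_pos by (simp add: sq_iter_def)
  then have "sq_iter c w m (sq_iter c w n x) = c + w * ((x - c) / w) powr (2 powr n * 2 powr m)"
    by (simp add: sq_iter_def[of _ _ m] powr_powr)
  also have "\<dots> = sq_iter c w (n + m) x"
    by (simp add: sq_iter_def powr_add)
  finally show ?thesis .
qed

lemma sq_iter_mono:
  assumes "c \<le> x" "x \<le> y" shows "sq_iter c w n x \<le> sq_iter c w n y"
proof -
  have "((x - c) / w) powr (2 powr n) \<le> ((y - c) / w) powr (2 powr n)"
    using assms w_pos by (intro powr_mono2 divide_right_mono) auto
  then show ?thesis using w_pos by (simp add: sq_iter_def)
qed

lemma sq_iter_antimono:
  assumes "c \<le> x" "x \<le> c + w" "n \<le> m" shows "sq_iter c w m x \<le> sq_iter c w n x"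
proof -
  have "((x - c) / w) powr (2 powr m) \<le> ((x - c) / w) powr (2 powr n)"
  proof (rule powr_mono')
    show "2 powr n \<le> 2 powr m" using assms(3) by simp
  qed (use assms w_pos in auto)
  then show ?thesis using w_pos by (simp add: sq_iter_def)
qed

end

text \<open>
  \<open>Mid\<close> and \<open>Out\<close> are constants so that the simplifier treats membership in them as atomic,
  whereas \<open>Low\<close> and \<open>High\<close> unfold to inequalities. \<open>High\<close> excludes \<open>1\<close>, which \<open>UU\<close> treats
  as absorbing.
\<close>

abbreviation Low :: "real set" where "Low \<equiv> {0..1/4}"
definition Mid :: "real set" where "Mid = {1/4<..<3/4}"
abbreviation High :: "real set" where "High \<equiv> {3/4..<1}"
definition Out :: "real set" where "Out = {0..1} - Mid"

lemma unit_interval_cases: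
  assumes "x \<in> {0..1}"
  obtains "x \<in> Low" | "x \<in> Mid" | "x \<in> High" | "x = 1"
  using assms unfolding Mid_def by fastforce

lemma out_cases:
  assumes "x \<in> Out"
  obtains "x \<in> Low" | "x \<in> High" | "x = 1"
  using assms unfolding Out_def Mid_def by fastforce

lemma mid_out_cases:
  assumes "x \<in> {0..1}"
  obtains "x \<in> Mid" | "x \<in> Out"
  using assms unfolding Out_def by blast

lemma Out_in_unit: "x \<in> Out \<Longrightarrow> x \<in> {0..1}"
  by (simp add: Out_def)

lemma unit_eq_Mid_Un_Out: "{0..1} = Mid \<union> Out"
  by (auto simp: Out_def Mid_def)

definition fF_iter :: "int \<Rightarrow> real \<Rightarrow> real" where
  "fF_iter n x =
    (if x \<le> 1/4 then sq_iter 0 (1/4) n x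
     else if x < 3/4 then sq_iter (1/4) (1/2) n x
     else sq_iter (3/4) (1/4) n x)"

lemma fF_iter_Low: "x \<in> Low \<Longrightarrow> fF_iter n x = sq_iter 0 (1/4) n x"
  by (simp add: fF_iter_def)

lemma fF_iter_Mid: "x \<in> Mid \<Longrightarrow> fF_iter n x = sq_iter (1/4) (1/2) n x"
  by (simp add: fF_iter_def Mid_def)

lemma fF_iter_High: "3/4 \<le> x \<Longrightarrow> fF_iter n x = sq_iter (3/4) (1/4) n x"
  by (simp add: fF_iter_def)

lemma fF_iter_fixpoints [simp]: "fF_iter n 0 = 0" "fF_iter n (3/4) = 3/4" "fF_iter n 1 = 1"
  by (simp_all add: fF_iter_def sq_iter_def)

lemma fF_iter_in_Low: "x \<in> Low \<Longrightarrow> fF_iter n x \<in> Low"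
  using sq_iter_ge[of "1/4" 0 n x] sq_iter_le[of "1/4" 0 x n] by (simp add: fF_iter_Low)

lemma fF_iter_in_Mid: "x \<in> Mid \<Longrightarrow> fF_iter n x \<in> Mid"
  using sq_iter_gt[of "1/2" "1/4" x n] sq_iter_less[of "1/2" "1/4" x n]
  by (simp add: fF_iter_Mid Mid_def)

lemma fF_iter_in_High: "x \<in> High \<Longrightarrow> fF_iter n x \<in> High"
  using sq_iter_ge[of "1/4" "3/4" n x] sq_iter_less[of "1/4" "3/4" x n] by (simp add: fF_iter_High)

lemma fF_iter_in_Out: "x \<in> Out \<Longrightarrow> fF_iter n x \<in> Out"
  by (elim out_cases; (frule fF_iter_in_Low[of _ n] fF_iter_in_High[of _ n])?)
    (auto simp: Out_def Mid_def)

lemma fF_iter_in_unit: "x \<in> {0..1} \<Longrightarrow> fF_iter n x \<in> {0..1}"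
  by (elim unit_interval_cases;
      (drule fF_iter_in_Low[of _ n] fF_iter_in_Mid[of _ n] fF_iter_in_High[of _ n])?; simp add: Mid_def)

lemma fF_iter_0: "x \<in> {0..1} \<Longrightarrow> fF_iter 0 x = x"
  by (elim unit_interval_cases) (simp_all add: fF_iter_Low fF_iter_Mid fF_iter_High sq_iter_0 Mid_def)

lemma fF_iter_fF_iter:
  assumes "x \<in> {0..1}" shows "fF_iter m (fF_iter n x) = fF_iter (n + m) x"
proof (cases rule: unit_interval_cases[OF assms])
  case 1
  then show ?thesis using fF_iter_in_Low[OF 1, of n] by (simp add: fF_iter_Low sq_iter_sq_iter)
next
  case 2
  then show ?thesis using fF_iter_in_Mid[OF 2, of n] by (simp add: fF_iter_Mid sq_iter_sq_iter Mid_def)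
next
  case 3
  then show ?thesis using fF_iter_in_High[OF 3, of n] by (simp add: fF_iter_High sq_iter_sq_iter)
qed simp

lemma fF_iter_mono:
  assumes "0 \<le> x" "x \<le> y" shows "fF_iter n x \<le> fF_iter n y"
  using assms sq_iter_mono[of "1/4" 0 x y n] sq_iter_mono[of "1/2" "1/4" x y n]
    sq_iter_mono[of "1/4" "3/4" x y n] sq_iter_le[of "1/4" 0 x n] sq_iter_less[of "1/2" "1/4" x n]
    sq_iter_gt[of "1/2" "1/4" y n] sq_iter_ge[of "1/4" "3/4" n y]
  unfolding fF_iter_def by auto

lemma fF_iter_antimono: "x \<in> Out \<Longrightarrow> n \<le> m \<Longrightarrow> fF_iter m x \<le> fF_iter n x"
  using sq_iter_antimono[of "1/4" 0 x n m] sq_iter_antimono[of "1/4" "3/4" x n m]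
  by (auto simp: fF_iter_Low fF_iter_High Out_def Mid_def)

lemma fF_eq_fF_iter: "x \<in> {0..1} \<Longrightarrow> fF x = fF_iter 1 x"
  by (elim unit_interval_cases)
    (simp_all add: fF_def fF_iter_Low fF_iter_Mid fF_iter_High sq_iter_1 power2_eq_square
      algebra_simps Mid_def)

lemma fF_fF_iter: "x \<in> {0..1} \<Longrightarrow> fF (fF_iter n x) = fF_iter (n + 1) x"
  by (simp add: fF_eq_fF_iter[OF fF_iter_in_unit] fF_iter_fF_iter)

lemma inv_into_fF:
  assumes "y \<in> {0..1}" shows "inv_into {0..1} fF y = fF_iter (-1) y"
proof (rule inv_into_f_eq)
  show "inj_on fF {0..1}"
    by (rule inj_on_inverseI[where g = "fF_iter (-1)"])
      (simp add: fF_eq_fF_iter fF_iter_fF_iter fF_iter_0)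
  show "fF_iter (-1) y \<in> {0..1}"
    using assms by (rule fF_iter_in_unit)
  show "fF (fF_iter (-1) y) = y"
    using assms by (simp add: fF_fF_iter fF_iter_0)
qed

lemma fiter_fF:
  assumes x: "x \<in> {0..1}" shows "fiter fF n x = fF_iter n x"
proof -
  have "(fF ^^ k) x = fF_iter (int k) x" for k
    using x by (induction k) (simp_all add: fF_iter_0 fF_fF_iter add.commute)
  moreover have "(inv_into {0..1} fF ^^ k) x = fF_iter (- int k) x" for k
  proof (induction k)
    case (Suc k)
    then show ?case
      by (simp add: inv_into_fF[OF fF_iter_in_unit[OF x]] fF_iter_fF_iter[OF x] algebra_simps)
  qed (use x in \<open>simp add: fF_iter_0\<close>)
  ultimately show ?thesis
    by (simp add: fiter_def)
qed

section \<open>The middle part\<close>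

definition mid_chart :: "real \<Rightarrow> real" where
  "mid_chart x = 2 * (x - 1/4)"

lemma mid_chart_mem: "x \<in> Mid \<Longrightarrow> mid_chart x \<in> {0<..<1}"
  by (simp add: mid_chart_def Mid_def)

lemma mid_chart_le_iff [simp]: "mid_chart x \<le> mid_chart y \<longleftrightarrow> x \<le> y"
  by (simp add: mid_chart_def)

lemma mid_chart_half [simp]: "mid_chart (1/2) = 1/2"
  by (simp add: mid_chart_def)

lemma U1star_eq: "U1star x y = 1/4 + 1/2 * U1 (mid_chart x) (mid_chart y)"
  by (simp add: U1star_def mid_chart_def)

lemma mid_chart_U1star: "mid_chart (U1star x y) = U1 (mid_chart x) (mid_chart y)"
  by (simp add: U1star_def mid_chart_def)

lemma U1star_in_Mid: "x \<in> Mid \<Longrightarrow> y \<in> Mid \<Longrightarrow> U1star x y \<in> Mid"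
  using U1_mem[OF mid_chart_mem mid_chart_mem, of x y] by (simp add: U1star_eq Mid_def)

lemma U1star_commute: "x \<in> Mid \<Longrightarrow> y \<in> Mid \<Longrightarrow> U1star x y = U1star y x"
  by (simp add: U1star_eq U1_commute[OF mid_chart_mem mid_chart_mem])

lemma U1star_assoc:
  "x \<in> Mid \<Longrightarrow> y \<in> Mid \<Longrightarrow> z \<in> Mid \<Longrightarrow> U1star (U1star x y) z = U1star x (U1star y z)"
  by (simp only: U1star_eq[of "U1star x y"] U1star_eq[of x "U1star y z"] mid_chart_U1star
      U1_assoc[OF mid_chart_mem mid_chart_mem mid_chart_mem])

lemma U1star_mono:
  "x \<in> Mid \<Longrightarrow> x' \<in> Mid \<Longrightarrow> y \<in> Mid \<Longrightarrow> x \<le> x' \<Longrightarrow> U1star x y \<le> U1star x' y"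
  by (simp add: U1star_eq U1_mono[OF mid_chart_mem mid_chart_mem mid_chart_mem])

lemma U1star_half_right: "x \<in> Mid \<Longrightarrow> U1star x (1/2) = x"
  by (simp add: U1star_eq U1_half_right[OF mid_chart_mem]) (simp add: mid_chart_def field_simps)

lemma fiter_fF_half: "fiter fF n (1/2) = 1/4 + 1/2 * dexp n"
proof -
  have "(1/2 :: real) \<in> Mid" by (simp add: Mid_def)
  then show ?thesis
    by (simp add: fiter_fF fF_iter_Mid sq_iter_def dexp_def powr_minus_divide powr_divide)
qed

lemma idx_eq:
  assumes "x \<in> Mid" shows "idx x = \<lfloor>dlog (mid_chart x)\<rfloor>"
proof -
  have "x \<in> {fiter fF (n + 1) (1/2) <.. fiter fF n (1/2)} \<longleftrightarrow>
      mid_chart x \<in> {dexp (of_int n + 1) <.. dexp (of_int n)}" for n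
    by (auto simp: fiter_fF_half mid_chart_def)
  then show ?thesis
    using floor_dlog_iff[OF mid_chart_mem[OF assms]]
    unfolding idx_def by (auto intro!: the_equality)
qed

lemma idx_U1star: "x \<in> Mid \<Longrightarrow> y \<in> Mid \<Longrightarrow> idx (U1star x y) = idx x + idx y"
  by (simp add: idx_eq U1star_in_Mid mid_chart_U1star floor_dlog_U1[OF mid_chart_mem mid_chart_mem])

lemma idx_antimono: "x \<in> Mid \<Longrightarrow> y \<in> Mid \<Longrightarrow> x \<le> y \<Longrightarrow> idx y \<le> idx x"
  using mid_chart_mem[of x] mid_chart_mem[of y] by (simp add: idx_eq floor_mono dlog_antimono)

lemma idx_half: "idx (1/2) = 0"
  by (simp add: idx_eq Mid_def)

section \<open>The uninorm \<open>UU\<close>\<close>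

lemma UU_1_left: "y \<le> 1 \<Longrightarrow> UU 1 y = 1"
  by (simp add: UU_def)

lemma UU_1_right: "x \<le> 1 \<Longrightarrow> UU x 1 = 1"
  by (simp add: UU_def)

lemma UU_Low_Low: "x \<in> Low \<Longrightarrow> y \<in> Low \<Longrightarrow> UU x y = 0"
  by (simp add: UU_def Let_def max_def)

lemma UU_High_High: "x \<in> High \<Longrightarrow> y \<in> High \<Longrightarrow> UU x y = 1"
  by (simp add: UU_def Let_def max_def)

lemma UU_Low_High: "x \<in> Low \<Longrightarrow> y \<in> High \<Longrightarrow> UU x y = 3/4"
  by (simp add: UU_def Let_def max_def)

lemma UU_High_Low: "x \<in> High \<Longrightarrow> y \<in> Low \<Longrightarrow> UU x y = 3/4"
  by (simp add: UU_def Let_def max_def)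

lemma UU_Mid_Mid: "x \<in> Mid \<Longrightarrow> y \<in> Mid \<Longrightarrow> UU x y = U1star x y"
  by (simp add: UU_def Let_def max_def Mid_def)

lemma UU_Out_Mid: "x \<in> Out \<Longrightarrow> y \<in> Mid \<Longrightarrow> UU x y = fF_iter (idx y) x"
  by (elim out_cases) (simp_all add: UU_def Let_def max_def fiter_fF Mid_def)

lemma UU_Mid_Out: "x \<in> Mid \<Longrightarrow> y \<in> Out \<Longrightarrow> UU x y = fF_iter (idx x) y"
  by (elim out_cases) (simp_all add: UU_def Let_def max_def fiter_fF Mid_def)

lemmas UU_Out_Out_simps = UU_1_left UU_1_right UU_Low_Low UU_High_High UU_Low_High UU_High_Low

lemma UU_Out_Out_values: "x \<in> Out \<Longrightarrow> y \<in> Out \<Longrightarrow> UU x y \<in> {0, 3/4, 1}"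
  by (elim out_cases) (simp_all add: UU_Out_Out_simps)

lemma fF_iter_UU_Out_Out:
  assumes "x \<in> Out" "y \<in> Out" shows "fF_iter n (UU x y) = UU x y"
  using UU_Out_Out_values[OF assms] by (elim insertE emptyE; simp only: fF_iter_fixpoints)

lemma UU_fF_iter_Out: "x \<in> Out \<Longrightarrow> y \<in> Out \<Longrightarrow> UU (fF_iter n x) y = UU x y"
  by (elim out_cases; (frule fF_iter_in_Low[of _ n] fF_iter_in_High[of _ n])?)
    (simp_all add: UU_Out_Out_simps)

lemma UU_Out_fF_iter: "x \<in> Out \<Longrightarrow> y \<in> Out \<Longrightarrow> UU x (fF_iter n y) = UU x y"
  by (elim out_cases; (frule fF_iter_in_Low[of _ n] fF_iter_in_High[of _ n])?)
    (simp_all add: UU_Out_Out_simps)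

lemma UU_assoc_Out:
  "x \<in> Out \<Longrightarrow> y \<in> Out \<Longrightarrow> z \<in> Out \<Longrightarrow> UU (UU x y) z = UU x (UU y z)"
  by (elim out_cases) (simp_all add: UU_Out_Out_simps)

lemma UU_Out_Out_in_Out: "x \<in> Out \<Longrightarrow> y \<in> Out \<Longrightarrow> UU x y \<in> Out"
  using UU_Out_Out_values[of x y] by (auto simp: Out_def Mid_def)

lemma UU_assoc:
  assumes "x \<in> {0..1}" "y \<in> {0..1}" "z \<in> {0..1}"
  shows "UU (UU x y) z = UU x (UU y z)"
  using assms
  by (elim mid_out_cases)
    (simp_all add: UU_Mid_Mid UU_Mid_Out UU_Out_Mid U1star_in_Mid fF_iter_in_Out UU_Out_Out_in_Out
      U1star_assoc idx_U1star fF_iter_fF_iter[OF Out_in_unit] UU_fF_iter_Out UU_Out_fF_iter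
      fF_iter_UU_Out_Out UU_assoc_Out add.commute)

lemma UU_in_unit: "x \<in> {0..1} \<Longrightarrow> y \<in> {0..1} \<Longrightarrow> UU x y \<in> {0..1}"
  unfolding unit_eq_Mid_Un_Out
  by (elim UnE)
    (simp_all add: UU_Mid_Mid UU_Mid_Out UU_Out_Mid U1star_in_Mid fF_iter_in_Out UU_Out_Out_in_Out)

lemma UU_commute_Out: "x \<in> Out \<Longrightarrow> y \<in> Out \<Longrightarrow> UU x y = UU y x"
  by (elim out_cases) (simp_all add: UU_Out_Out_simps)

lemma UU_commute: "x \<in> {0..1} \<Longrightarrow> y \<in> {0..1} \<Longrightarrow> UU x y = UU y x"
  by (elim mid_out_cases)
    (simp_all add: UU_Mid_Mid UU_Mid_Out UU_Out_Mid U1star_commute UU_commute_Out)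

lemma UU_half_left:
  assumes "x \<in> {0..1}" shows "UU (1/2) x = x"
proof -
  have half: "1/2 \<in> Mid" by (simp add: Mid_def)
  from assms show ?thesis
    by (elim mid_out_cases)
      (simp_all add: half UU_Mid_Mid UU_Mid_Out U1star_commute[OF half] U1star_half_right idx_half
        fF_iter_0[OF Out_in_unit])
qed

lemma UU_mono_left_Mid:
  assumes "x \<in> {0..1}" "x' \<in> {0..1}" "x \<le> x'" "y \<in> Mid"
  shows "UU x y \<le> UU x' y"
proof (cases rule: mid_out_cases[OF assms(1)]; cases rule: mid_out_cases[OF assms(2)])
  assume "x \<in> Mid" "x' \<in> Mid"
  then show ?thesis using assms by (simp add: UU_Mid_Mid U1star_mono)
next
  assume "x \<in> Mid" "x' \<in> Out"
  then have "3/4 \<le> x'" using assms(3) by (auto simp: Mid_def Out_def)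
  then show ?thesis
    using \<open>x \<in> Mid\<close> \<open>x' \<in> Out\<close> assms(4) U1star_in_Mid[of x y]
      sq_iter_ge[of "1/4" "3/4" "idx y" x']
    by (simp add: UU_Mid_Mid UU_Out_Mid fF_iter_High Mid_def)
next
  assume "x \<in> Out" "x' \<in> Mid"
  then have "x \<in> Low" using assms(3) by (auto simp: Mid_def Out_def)
  then show ?thesis
    using \<open>x \<in> Out\<close> \<open>x' \<in> Mid\<close> assms(4) U1star_in_Mid[of x' y] fF_iter_in_Low[of x "idx y"]
    by (simp add: UU_Mid_Mid UU_Out_Mid Mid_def)
next
  assume "x \<in> Out" "x' \<in> Out"
  then show ?thesis using assms by (simp add: UU_Out_Mid fF_iter_mono)
qed

lemma UU_mono_left_Out:
  assumes "x \<in> {0..1}" "x' \<in> {0..1}" "x \<le> x'" "y \<in> Out"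
  shows "UU x y \<le> UU x' y"
proof (cases rule: mid_out_cases[OF assms(1)]; cases rule: mid_out_cases[OF assms(2)])
  assume "x \<in> Mid" "x' \<in> Mid"
  then show ?thesis
    using assms fF_iter_antimono[of y "idx x'" "idx x"] by (simp add: UU_Mid_Out idx_antimono)
next
  assume "x \<in> Mid" "x' \<in> Out"
  then have "x' \<in> High \<or> x' = 1" using assms(3) by (auto simp: Mid_def Out_def)
  moreover have "UU x y = fF_iter (idx x) y" using \<open>x \<in> Mid\<close> assms(4) by (rule UU_Mid_Out)
  ultimately show ?thesis
    using assms(4) fF_iter_in_Low[of y "idx x"] fF_iter_in_High[of y "idx x"]
    by (elim out_cases disjE) (simp_all add: UU_Out_Out_simps)
next
  assume "x \<in> Out" "x' \<in> Mid"
  then have "x \<in> Low" using assms(3) by (auto simp: Mid_def Out_def)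
  moreover have "UU x' y = fF_iter (idx x') y" using \<open>x' \<in> Mid\<close> assms(4) by (rule UU_Mid_Out)
  ultimately show ?thesis
    using assms(4) fF_iter_in_Low[of y "idx x'"] fF_iter_in_High[of y "idx x'"]
    by (elim out_cases) (simp_all add: UU_Out_Out_simps)
next
  assume "x \<in> Out" "x' \<in> Out"
  then show ?thesis
    using assms(3,4) by (elim out_cases) (simp_all add: UU_Out_Out_simps)
qed

lemma UU_mono_left:
  "x \<in> {0..1} \<Longrightarrow> x' \<in> {0..1} \<Longrightarrow> y \<in> {0..1} \<Longrightarrow> x \<le> x' \<Longrightarrow> UU x y \<le> UU x' y"
  by (elim mid_out_cases[of y]) (simp_all add: UU_mono_left_Mid UU_mono_left_Out)

theorem mainTheorem12:
  shows "uninorm UU (1/2) \<and> disjunctive UU"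
proof -
  have half: "1/2 \<in> {0..1::real}" by simp
  have "UU x y \<le> UU x y'" if "x \<in> {0..1}" "y \<in> {0..1}" "y' \<in> {0..1}" "y \<le> y'" for x y y'
    using that UU_mono_left[of y y' x] by (simp add: UU_commute[of x])
  moreover have "UU x (1/2) = x" if "x \<in> {0..1}" for x
    using that UU_half_left UU_commute[OF that half] by simp
  ultimately show ?thesis
    unfolding uninorm_def disjunctive_def
    using UU_in_unit UU_commute UU_assoc UU_mono_left UU_half_left by (simp add: UU_1_left)
qed

end
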